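(* Let $k\ge 3$ and let $w$ be a word over $\{a,b\}$. Suppose an occurrence of $v=b^{k-1}a$ and an occurrence of $u=ba^{k-1}$ in $w$ are consecutive and overlap (the occurrence of $v$ first; necessarily the last two letters of $v$ coincide with the first two letters of $u$, giving the factor $b^{k-1}a^{k-1}$). Let $F_v,F_u\subseteq\{0,\dots,k-1\}$ be the corresponding sets of forbidden local positions. Then $$F_v\subseteq\{(j-2)\bmod k\mid j\in F_u\}\cup\{0\}.$$
   Context: $\Sigma=\{a,b\}$. For $k\ge 3$, $S_k=\left(\Sigma^k\setminus\{ba^{k-1},b^{k-1}a\}\right)\cup\left(\Sigma^{k-1}\setminus\{a^{k-1},b^{k-1}\}\right)$, $u=ba^{k-1}$, $v=b^{k-1}a$. $\mathit{Pref}(S^* )$ denotes the set of all prefixes of words in $S^*$. For $w=w_1\cdots w_n$, $w[i..j]=w_i\cdots w_j$ (empty if $i>j$). A position $j$, $0\le j\le n-1$, is forbidden in $w$ if $w[j+1..n]\notin\mathit{Pref}(S_k^* )$. An occurrence of $p\in\{u,v\}$ in $w$ is an index $s$ with $w[s+1..s+k]=p$; local position $i\in\{0,\dots,k-1\}$ of the occurrence is the position $s+i$ of $w$, and it is forbidden in the occurrence if $s+i$ is forbidden in $w$. Two occurrences of words from $\{u,v\}$ starting at $s<t$ overlap if $t<s+k$; they are consecutive if either they overlap or they are the only occurrences of $u$ or $v$ lying inside the factor $w[s+1..t+k]$. *)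

theory Defs
  imports Main
begin

datatype letter = a | b

type_synonym word = "letter list"

definition u_word :: "nat \<Rightarrow> word" where
  "u_word k = b # replicate (k - 1) a"

definition v_word :: "nat \<Rightarrow> word" where
  "v_word k = replicate (k - 1) b @ [a]"

definition S :: "nat \<Rightarrow> word set" where
  "S k = ({x. length x = k} - {u_word k, v_word k})
       \<union> ({x. length x = k - 1} - {replicate (k - 1) a, replicate (k - 1) b})"

definition star :: "word set \<Rightarrow> word set" where
  "star L = {concat ws | ws. set ws \<subseteq> L}"

definition Pref :: "word set \<Rightarrow> word set" where
  "Pref L = {x. \<exists>z. x @ z \<in> L}"

text \<open>Position j (0 <= j <= n-1) is forbidden in w iff w[j+1..n] is not in Pref(S_k^*).\<close>
definition forbidden :: "nat \<Rightarrow> word \<Rightarrow> nat \<Rightarrow> bool" where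
  "forbidden k w j \<longleftrightarrow> j < length w \<and> drop j w \<notin> Pref (star (S k))"

definition occ :: "word \<Rightarrow> word \<Rightarrow> nat \<Rightarrow> bool" where
  "occ p w s \<longleftrightarrow> s + length p \<le> length w \<and> take (length p) (drop s w) = p"

definition occ_uv :: "nat \<Rightarrow> word \<Rightarrow> nat \<Rightarrow> bool" where
  "occ_uv k w s \<longleftrightarrow> occ (u_word k) w s \<or> occ (v_word k) w s"

definition overlap :: "nat \<Rightarrow> nat \<Rightarrow> nat \<Rightarrow> bool" where
  "overlap k s t \<longleftrightarrow> s < t \<and> t < s + k"

definition consecutive :: "nat \<Rightarrow> word \<Rightarrow> nat \<Rightarrow> nat \<Rightarrow> bool" where
  "consecutive k w s t \<longleftrightarrow> occ_uv k w s \<and> occ_uv k w t \<and> s < t \<and>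
     (overlap k s t \<or> (\<forall>r. occ_uv k w r \<and> s \<le> r \<and> r + k \<le> t + k \<longrightarrow> r = s \<or> r = t))"

definition forbidden_local :: "nat \<Rightarrow> word \<Rightarrow> nat \<Rightarrow> nat set" where
  "forbidden_local k w s = {i. i < k \<and> forbidden k w (s + i)}"

end

theory Submission
  imports Defs
begin

text \<open>
  In an overlapping pair formed by an occurrence of v = b^(k-1) a at s
  followed by an occurrence of u = b a^(k-1) at t, the letter w[t] = b and the letter
  w[t+1] = a force t = s + k - 2, i.e. the factor b^(k-1) a^(k-1).  Now let i be a
  forbidden local position of v with i \<noteq> 0.  If i \<ge> k - 2, the position s + i is
  itself the local position (i + 2) mod k of u.  If 1 \<le> i \<le> k - 3, the length-k factor
  starting at s + i has a b at offset 1 and an a at offset k - 2, hence is neither u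
  nor v and belongs to S_k; since S_k-factors can be prepended to words of
  Pref(S_k^*), position s + i can only be forbidden if s + i + k = t + (i + 2) is.
  Finally (i + 2) mod k is mapped back to i by j \<mapsto> (j - 2) mod k.
\<close>

lemma Pref_star_prepend:
  assumes "x \<in> L" and "y \<in> Pref (star L)"
  shows "x @ y \<in> Pref (star L)"
proof -
  from assms(2) obtain z ws where "y @ z = concat ws" and "set ws \<subseteq> L"
    unfolding Pref_def star_def by blast
  then have "(x @ y) @ z = concat (x # ws)" and "set (x # ws) \<subseteq> L"
    using assms(1) by auto
  then show ?thesis unfolding Pref_def star_def by blast
qed

lemma forbidden_across_factor:
  assumes x_S: "x \<in> S k"
    and factor: "take (length x) (drop j w) = x"
    and in_word: "j + length x < length w"
    and forb: "forbidden k w j"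
  shows "forbidden k w (j + length x)"
proof (rule ccontr)
  assume "\<not> forbidden k w (j + length x)"
  then have "drop (j + length x) w \<in> Pref (star (S k))"
    using in_word unfolding forbidden_def by simp
  moreover have "drop j w = x @ drop (j + length x) w"
    using factor by (metis append_take_drop_id drop_drop add.commute)
  ultimately have "drop j w \<in> Pref (star (S k))"
    using Pref_star_prepend[OF x_S] by simp
  then show False using forb unfolding forbidden_def by simp
qed

lemma factor_in_S:
  assumes "k \<ge> 3" and "length x = k" and "x ! 1 = b" and "x ! (k - 2) = a"
  shows "x \<in> S k"
proof -
  have "u_word k ! 1 = a" using assms(1) by (cases k) (auto simp: u_word_def)
  then have "x \<noteq> u_word k" using assms(3) by auto
  moreover have "v_word k ! (k - 2) = b" using assms(1) by (simp add: v_word_def nth_append)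
  then have "x \<noteq> v_word k" using assms(4) by auto
  ultimately show ?thesis using assms(2) unfolding S_def by simp
qed

lemma occ_nth:
  assumes "occ p w s" and "q < length p"
  shows "w ! (s + q) = p ! q"
  using assms unfolding occ_def by (metis add_leD1 le_add_diff_inverse nth_drop nth_take)

lemma occ_v_letter:
  assumes "occ (v_word k) w s" and "k \<ge> 1" and "q < k"
  shows "w ! (s + q) = (if q < k - 1 then b else a)"
  using occ_nth[OF assms(1)] assms(2,3) by (simp add: v_word_def nth_append)

lemma occ_u_letter:
  assumes "occ (u_word k) w t" and "k \<ge> 1" and "q < k"
  shows "w ! (t + q) = (if q = 0 then b else a)"
proof -
  have "u_word k ! q = (if q = 0 then b else a)" using assms(3) by (cases q) (auto simp: u_word_def)
  then show ?thesis using occ_nth[OF assms(1)] assms(2,3) by (simp add: u_word_def)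
qed

text \<open>An overlapping occurrence of u after one of v starts exactly k - 2 positions later:
  w[t] = b rules out t = s + k - 1, and w[t+1] = a rules out t < s + k - 2.\<close>
lemma overlap_v_u_offset:
  assumes k3: "k \<ge> 3" and v_at: "occ (v_word k) w s" and u_at: "occ (u_word k) w t"
    and ov: "overlap k s t"
  shows "t = s + (k - 2)"
proof -
  define d where "d = t - s"
  have t_eq: "t = s + d" and "0 < d" and "d < k" using ov unfolding overlap_def d_def by auto
  have "d \<noteq> k - 1"
  proof
    assume "d = k - 1"
    then have "w ! t = a" using occ_v_letter[OF v_at, of d] t_eq \<open>d < k\<close> by simp
    moreover have "w ! t = b" using occ_u_letter[OF u_at, of 0] k3 by simp
    ultimately show False by simp
  qed
  moreover have "\<not> d + 1 < k - 1"
  proof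
    assume "d + 1 < k - 1"
    then have "w ! (t + 1) = b" using occ_v_letter[OF v_at, of "d + 1"] t_eq by simp
    moreover have "w ! (t + 1) = a" using occ_u_letter[OF u_at, of 1] k3 by simp
    ultimately show False by simp
  qed
  ultimately show ?thesis using t_eq \<open>d < k\<close> by linarith
qed

lemma forbidden_v_to_u:
  assumes k3: "k \<ge> 3" and v_at: "occ (v_word k) w s" and u_at: "occ (u_word k) w t"
    and t_eq: "t = s + (k - 2)"
    and i: "0 < i" "i < k" and forb: "forbidden k w (s + i)"
  shows "forbidden k w (t + (i + 2) mod k)"
proof (cases "i \<ge> k - 2")
  case True
  then have "t + (i + 2) mod k = s + i"
    using t_eq i k3 by (cases "i = k - 2") (auto simp: mod_if)
  then show ?thesis using forb by simp
next
  case False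
  define x where "x = take k (drop (s + i) w)"
  have len_w: "t + k \<le> length w" using u_at k3 unfolding occ_def by (simp add: u_word_def)
  have len_x: "length x = k" using len_w t_eq False unfolding x_def by simp
  have x_nth: "x ! p = w ! (s + i + p)" if "p < k" for p
    using that len_w t_eq False unfolding x_def by (simp add: add.assoc)
  have "x ! 1 = b" using x_nth[of 1] occ_v_letter[OF v_at, of "i + 1"] False k3
    by (simp add: add.assoc)
  moreover have "x ! (k - 2) = a"
    using x_nth[of "k - 2"] occ_u_letter[OF u_at, of i] i k3 t_eq
    by (simp add: add.commute add.left_commute)
  ultimately have "x \<in> S k" using factor_in_S[OF k3 len_x] by simp
  then have "forbidden k w (s + i + k)"
    using forbidden_across_factor[of x k "s + i" w] len_x len_w t_eq False forb
    unfolding x_def by simp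
  moreover have "s + i + k = t + (i + 2) mod k" using False t_eq i by simp
  ultimately show ?thesis by simp
qed

lemma shift_back:
  assumes "i < k"
  shows "nat ((int ((i + 2) mod k) - 2) mod int k) = i"
proof -
  have "(int ((i + 2) mod k) - 2) mod int k = (int i + 2 - 2) mod int k"
    by (simp add: zmod_int mod_diff_left_eq)
  then show ?thesis using assms by simp
qed

theorem lemma4:
  fixes k :: nat and w :: word and s t :: nat
  assumes "k \<ge> 3"
    and "occ (v_word k) w s"
    and "occ (u_word k) w t"
    and "consecutive k w s t"
    and "overlap k s t"
  shows "forbidden_local k w s \<subseteq>
           {nat ((int j - 2) mod int k) | j. j \<in> forbidden_local k w t} \<union> {0}"
proof
  fix i assume "i \<in> forbidden_local k w s"
  then have "i < k" and forb: "forbidden k w (s + i)" unfolding forbidden_local_def by auto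
  have t_eq: "t = s + (k - 2)" using overlap_v_u_offset assms(1,2,3,5) .
  show "i \<in> {nat ((int j - 2) mod int k) | j. j \<in> forbidden_local k w t} \<union> {0}"
  proof (cases "i = 0")
    case False
    then have "(i + 2) mod k \<in> forbidden_local k w t"
      using forbidden_v_to_u[OF assms(1,2,3) t_eq _ \<open>i < k\<close> forb] assms(1)
      unfolding forbidden_local_def by simp
    with shift_back[OF \<open>i < k\<close>] show ?thesis by (metis (mono_tags, lifting) UnI1 mem_Collect_eq)
  qed simp
qed

end
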